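(* Let $X$ be a real Hilbert space, let $\lambda>0$, and let $f\colon X\to\,]-\infty,+\infty]$ be proper, lower semicontinuous, minorized by a concave quadratic (there exist $\nu,\beta\in\mathbb R$, $\alpha\ge0$ with $f(x)\ge-\alpha\|x\|^2-\beta\|x\|+\nu$ for all $x$), and $\tfrac1\lambda$-hypoconvex. Then for every abstract subdifferential $\hat\partial$, $$\hat\partial f=\partial\Big(f+\tfrac{1}{2\lambda}\|\cdot\|^2\Big)-\tfrac1\lambda\mathrm{Id}.$$ Consequently, for such $f$ the Clarke–Rockafellar, Mordukhovich and Fréchet subdifferentials of $f$ all coincide.
   Context: $\partial$ denotes the convex-analysis subdifferential. $f$ is $\tfrac1\lambda$-hypoconvex if $f((1-\tau)x+\tau y)\le(1-\tau)f(x)+\tau f(y)+\tfrac{1}{2\lambda}\tau(1-\tau)\|x-y\|^2$ for all $x,y\in X$, $\tau\in]0,1[$. An abstract subdifferential $\hat\partial$ assigns to a function $g$ (in the class of proper lsc functions minorized by a concave quadratic) and $x\in X$ a set $\hat\partial g(x)\subseteq X$ such that: (a) $\hat\partial g=\partial g$ if $g$ is proper lsc convex; (b) $\hat\partial g=\nabla g$ if $g$ is continuously differentiable; (c) $0\in\hat\partial g(x)$ if $g$ attains a local minimum at $x\in\operatorname{dom}g$; (d) for every $\beta\in\mathbb R$ and $x\in X$, $\hat\partial\big(g+\beta\tfrac{\|\cdot-x\|^2}{2}\big)=\hat\partial g+\beta(\mathrm{Id}-x)$. The Clarke–Rockafellar, Mordukhovich and Fréchet subdifferentials satisfy (a)–(d).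 *)

theory Defs
  imports "HOL-Analysis.Analysis"
begin

text \<open>Functions X \<rightarrow> ]-\<infinity>,+\<infinity>] are modelled as maps into ereal that never take the value -\<infinity>.
  X is a real Hilbert space: a type of class real_inner and complete_space.\<close>

definition edom :: "('a \<Rightarrow> ereal) \<Rightarrow> 'a set" where
  "edom g = {x. g x < \<infinity>}"

definition proper_fun :: "('a \<Rightarrow> ereal) \<Rightarrow> bool" where
  "proper_fun g \<longleftrightarrow> (\<forall>x. g x \<noteq> -\<infinity>) \<and> edom g \<noteq> {}"

definition lsc_fun :: "('a::topological_space \<Rightarrow> ereal) \<Rightarrow> bool" where
  "lsc_fun g \<longleftrightarrow> (\<forall>x. g x \<le> Liminf (at x) g)"

definition convex_fun :: "('a::real_vector \<Rightarrow> ereal) \<Rightarrow> bool" where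
  "convex_fun g \<longleftrightarrow> (\<forall>x y \<tau>. 0 < \<tau> \<and> \<tau> < 1 \<longrightarrow>
     g ((1 - \<tau>) *\<^sub>R x + \<tau> *\<^sub>R y) \<le> ereal (1 - \<tau>) * g x + ereal \<tau> * g y)"

definition minorized_cq :: "('a::real_normed_vector \<Rightarrow> ereal) \<Rightarrow> bool" where
  "minorized_cq g \<longleftrightarrow> (\<exists>\<alpha> \<beta> \<nu>. \<alpha> \<ge> 0 \<and>
     (\<forall>x. ereal (- \<alpha> * (norm x)\<^sup>2 - \<beta> * norm x + \<nu>) \<le> g x))"

definition subdiff_class :: "('a::real_normed_vector \<Rightarrow> ereal) \<Rightarrow> bool" where
  "subdiff_class g \<longleftrightarrow> proper_fun g \<and> lsc_fun g \<and> minorized_cq g"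

definition hypoconvex :: "real \<Rightarrow> ('a::real_inner \<Rightarrow> ereal) \<Rightarrow> bool" where
  "hypoconvex lam g \<longleftrightarrow> (\<forall>x y \<tau>. 0 < \<tau> \<and> \<tau> < 1 \<longrightarrow>
     g ((1 - \<tau>) *\<^sub>R x + \<tau> *\<^sub>R y) \<le> ereal (1 - \<tau>) * g x + ereal \<tau> * g y
        + ereal (\<tau> * (1 - \<tau>) / (2 * lam) * (norm (x - y))\<^sup>2))"

definition cvx_subdiff :: "('a::real_inner \<Rightarrow> ereal) \<Rightarrow> 'a \<Rightarrow> 'a set" where
  "cvx_subdiff g x = (if x \<in> edom g then
     {u. \<forall>y. g x + ereal (u \<bullet> (y - x)) \<le> g y} else {})"

text \<open>Abstract subdifferential: properties (a)-(d) on the class subdiff_class.\<close>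
definition abstract_subdiff :: "(('a::real_inner \<Rightarrow> ereal) \<Rightarrow> 'a \<Rightarrow> 'a set) \<Rightarrow> bool" where
  "abstract_subdiff D \<longleftrightarrow>
     (\<forall>g. subdiff_class g \<and> convex_fun g \<longrightarrow> D g = cvx_subdiff g) \<and>
     (\<forall>g h G. subdiff_class g \<and> g = (\<lambda>x. ereal (h x)) \<and>
         (\<forall>x. (h has_derivative (\<lambda>v. G x \<bullet> v)) (at x)) \<and> continuous_on UNIV G
         \<longrightarrow> (\<forall>x. D g x = {G x})) \<and>
     (\<forall>g x. subdiff_class g \<and> x \<in> edom g \<and>
         (\<forall>\<^sub>F y in at x. g x \<le> g y) \<longrightarrow> 0 \<in> D g x) \<and>
     (\<forall>g (\<beta>::real) x. subdiff_class g \<longrightarrow>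
         (\<forall>y. D (\<lambda>z. g z + ereal (\<beta> * (norm (z - x))\<^sup>2 / 2)) y
                = (\<lambda>u. u + \<beta> *\<^sub>R (y - x)) ` D g y))"

end

theory Submission
  imports Defs
begin

text \<open>Adding \<open>\<parallel>\<cdot>\<parallel>\<^sup>2/(2\<lambda>)\<close> exactly cancels the defect term in the definition of
  hypoconvexity (by the identity for the squared norm of a convex combination), so
  \<open>g = f + \<parallel>\<cdot>\<parallel>\<^sup>2/(2\<lambda>)\<close> is convex and stays in the class on which \<open>\<hat>\<partial>\<close> is defined.
  Then (a) gives \<open>\<hat>\<partial>g = \<partial>g\<close>, while (d) with \<open>\<beta> = 1/\<lambda>\<close> and centre 0 gives
  \<open>\<hat>\<partial>g = \<hat>\<partial>f + (1/\<lambda>) Id\<close>.\<close>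

lemma norm_convex_combination_sq:
  fixes x y :: "'a::real_inner"
  shows "(norm ((1 - t) *\<^sub>R x + t *\<^sub>R y))\<^sup>2
     = (1 - t) * (norm x)\<^sup>2 + t * (norm y)\<^sup>2 - t * (1 - t) * (norm (x - y))\<^sup>2"
  unfolding power2_norm_eq_inner
  by (simp add: inner_add_left inner_add_right inner_diff_left
      inner_diff_right inner_commute algebra_simps)

lemma hypoconvex_imp_convex_fun_add_norm_sq:
  fixes f :: "'a::real_inner \<Rightarrow> ereal"
  assumes lam: "lam > 0" and not_minf: "\<And>x. f x \<noteq> -\<infinity>" and hc: "hypoconvex lam f"
  shows "convex_fun (\<lambda>z. f z + ereal ((norm z)\<^sup>2 / (2 * lam)))"
  unfolding convex_fun_def
proof (intro allI impI)
  fix x y :: 'a and t :: real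
  assume t: "0 < t \<and> t < 1"
  let ?m = "(1 - t) *\<^sub>R x + t *\<^sub>R y"
  have hypo: "f ?m \<le> ereal (1 - t) * f x + ereal t * f y
        + ereal (t * (1 - t) / (2 * lam) * (norm (x - y))\<^sup>2)"
    using hc t unfolding hypoconvex_def by blast
  have norm_m: "(norm ?m)\<^sup>2 / (2 * lam)
      = (1 - t) * ((norm x)\<^sup>2 / (2 * lam)) + t * ((norm y)\<^sup>2 / (2 * lam))
        - t * (1 - t) / (2 * lam) * (norm (x - y))\<^sup>2"
    unfolding norm_convex_combination_sq using lam by (simp add: field_simps)
  show "f ?m + ereal ((norm ?m)\<^sup>2 / (2 * lam))
        \<le> ereal (1 - t) * (f x + ereal ((norm x)\<^sup>2 / (2 * lam)))
         + ereal t * (f y + ereal ((norm y)\<^sup>2 / (2 * lam)))"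
  proof (cases "f x = \<infinity> \<or> f y = \<infinity>")
    case True
    then show ?thesis using t not_minf by (auto simp: ereal_mult_infty)
  next
    case False
    then obtain a b where ab: "f x = ereal a" "f y = ereal b"
      using not_minf by (metis ereal_cases)
    then obtain c where c: "f ?m = ereal c"
      using hypo not_minf by (cases "f ?m") auto
    have "c \<le> (1 - t) * a + t * b + t * (1 - t) / (2 * lam) * (norm (x - y))\<^sup>2"
      using hypo ab c by simp
    then show ?thesis using ab c norm_m by (simp add: algebra_simps)
  qed
qed

lemma proper_fun_add_real:
  assumes "proper_fun g"
  shows "proper_fun (\<lambda>z. g z + ereal (h z))"
proof -
  have not_minf: "\<And>z. g z \<noteq> -\<infinity>" using assms unfolding proper_fun_def by auto
  then have "edom (\<lambda>z. g z + ereal (h z)) = edom g"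
    unfolding edom_def by auto
  then show ?thesis using assms not_minf unfolding proper_fun_def by auto
qed

lemma minorized_cq_add_nonneg:
  assumes "minorized_cq g" and "\<And>z. 0 \<le> h z"
  shows "minorized_cq (\<lambda>z. g z + ereal (h z))"
proof -
  obtain \<alpha> \<beta> \<nu> where "\<alpha> \<ge> 0" "\<forall>x. ereal (- \<alpha> * (norm x)\<^sup>2 - \<beta> * norm x + \<nu>) \<le> g x"
    using assms(1) unfolding minorized_cq_def by blast
  moreover have "\<And>x. g x \<le> g x + ereal (h x)"
    by (rule ereal_le_add_self) (simp add: assms(2))
  ultimately show ?thesis unfolding minorized_cq_def by (meson order_trans)
qed

lemma lsc_fun_add_continuous:
  assumes lsc: "lsc_fun g" and cont: "\<And>x. isCont h x"
  shows "lsc_fun (\<lambda>z. g z + ereal (h z))"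
  unfolding lsc_fun_def le_Liminf_iff
proof (intro allI impI)
  fix x and y :: ereal
  assume y: "y < g x + ereal (h x)"
  have g_ev: "\<And>c. c < g x \<Longrightarrow> \<forall>\<^sub>F z in at x. c < g z"
    using lsc unfolding lsc_fun_def le_Liminf_iff by blast
  show "\<forall>\<^sub>F z in at x. y < g z + ereal (h z)"
  proof (cases y)
    case MInf
    then have "-\<infinity> < g x" using y by auto
    then have "\<forall>\<^sub>F z in at x. -\<infinity> < g z" by (rule g_ev)
    then show ?thesis by (rule eventually_mono) (simp add: MInf)
  next
    case PInf
    then show ?thesis using y by simp
  next
    case (real r)
    then have "ereal (r - h x) < g x" using y by (cases "g x") auto
    then obtain c where c: "ereal (r - h x) < ereal c" "ereal c < g x"
      using ereal_dense2 by blast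
    have "(h \<longlongrightarrow> h x) (at x)" using cont by (simp add: isCont_def)
    moreover have "c - (r - h x) > 0" using c(1) by simp
    ultimately have h_ev: "\<forall>\<^sub>F z in at x. dist (h z) (h x) < c - (r - h x)"
      by (simp add: tendsto_iff)
    from g_ev[OF c(2)] h_ev show ?thesis
    proof eventually_elim
      case (elim z)
      then show "y < g z + ereal (h z)"
        using real by (cases "g z") (auto simp: dist_real_def)
    qed
  qed
qed

lemma subdiff_class_add_norm_sq:
  fixes g :: "'a::real_inner \<Rightarrow> ereal"
  assumes "lam > 0" and "subdiff_class g"
  shows "subdiff_class (\<lambda>z. g z + ereal ((norm z)\<^sup>2 / (2 * lam)))"
proof -
  have nonneg: "\<And>z::'a. 0 \<le> (norm z)\<^sup>2 / (2 * lam)" using assms(1) by simp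
  have cont: "\<And>x::'a. isCont (\<lambda>z. (norm z)\<^sup>2 / (2 * lam)) x"
    using assms(1) by (intro continuous_intros) simp
  from assms(2) have "proper_fun g" "lsc_fun g" "minorized_cq g"
    unfolding subdiff_class_def by simp_all
  then show ?thesis
    unfolding subdiff_class_def
    by (simp add: proper_fun_add_real lsc_fun_add_continuous[OF _ cont]
        minorized_cq_add_nonneg[OF _ nonneg])
qed

lemma abstract_subdiff_convex:
  assumes "abstract_subdiff D" and "subdiff_class g" and "convex_fun g"
  shows "D g = cvx_subdiff g"
  using assms unfolding abstract_subdiff_def by simp

lemma abstract_subdiff_add_norm_sq:
  assumes "abstract_subdiff D" and "subdiff_class g"
  shows "D (\<lambda>z. g z + ereal ((norm z)\<^sup>2 / (2 * lam))) x
       = (\<lambda>u. u + (1 / lam) *\<^sub>R x) ` D g x"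
proof -
  have "(\<lambda>z. g z + ereal ((norm z)\<^sup>2 / (2 * lam)))
      = (\<lambda>z. g z + ereal ((1 / lam) * (norm (z - 0))\<^sup>2 / 2))"
    by (simp add: field_simps)
  moreover have "D (\<lambda>z. g z + ereal ((1 / lam) * (norm (z - 0))\<^sup>2 / 2)) x
      = (\<lambda>u. u + (1 / lam) *\<^sub>R (x - 0)) ` D g x"
    using assms unfolding abstract_subdiff_def by blast
  ultimately show ?thesis by simp
qed

theorem proposition6p2:
  fixes f :: "'a::{real_inner, complete_space} \<Rightarrow> ereal"
    and lam :: real
    and D :: "('a \<Rightarrow> ereal) \<Rightarrow> 'a \<Rightarrow> 'a set"
  assumes "lam > 0"
    and "proper_fun f"
    and "lsc_fun f"
    and "minorized_cq f"
    and "hypoconvex lam f"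
    and "abstract_subdiff D"
  shows "\<forall>x. D f x = (\<lambda>u. u - (1 / lam) *\<^sub>R x) `
            cvx_subdiff (\<lambda>z. f z + ereal ((norm z)\<^sup>2 / (2 * lam))) x"
proof
  fix x
  let ?g = "\<lambda>z. f z + ereal ((norm z)\<^sup>2 / (2 * lam))"
  have f_class: "subdiff_class f" using assms(2-4) unfolding subdiff_class_def by blast
  have "\<And>z. f z \<noteq> -\<infinity>" using assms(2) unfolding proper_fun_def by blast
  then have "convex_fun ?g"
    using assms(1,5) by (intro hypoconvex_imp_convex_fun_add_norm_sq)
  moreover have "subdiff_class ?g"
    using assms(1) f_class by (rule subdiff_class_add_norm_sq)
  ultimately have "D ?g = cvx_subdiff ?g"
    using assms(6) abstract_subdiff_convex by blast
  then have "cvx_subdiff ?g x = (\<lambda>u. u + (1 / lam) *\<^sub>R x) ` D f x"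
    using abstract_subdiff_add_norm_sq[OF assms(6) f_class, where lam = lam and x = x]
    by simp
  moreover have "(\<lambda>u. u - c) ` (\<lambda>u. u + c) ` S = S" for c :: 'a and S
    by (simp add: image_image)
  ultimately show "D f x = (\<lambda>u. u - (1 / lam) *\<^sub>R x) ` cvx_subdiff ?g x"
    by simp
qed

end
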